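(* Let $\Omega$ be a nonempty set, $\mathcal A$ an algebra on $\Omega$, and $\mathcal X_{\mathcal A}$ the set of bounded $\mathcal A$-measurable functions $\Omega\to\mathbb R$ (constants $c\in\mathbb R$ are identified with constant functions). Let $\preceq$ be a total preorder on $\mathcal X_{\mathcal A}$ that is increasing, i.e. $0\prec 1$, and that can be numerically represented, i.e. there exists $\mathcal R:\mathcal X_{\mathcal A}\to\mathbb R$ with $X\preceq Y$ if and only if $\mathcal R(X)\le\mathcal R(Y)$. Then the following are equivalent: (i) for all $X,Y\in\mathcal X_{\mathcal A}$ and all increasing continuous $\phi:\mathbb R\to\mathbb R$, $X\preceq Y$ implies $\phi(X)\preceq\phi(Y)$; (ii) there exists a numerical representation $\mathcal R$ of $\preceq$ satisfying ordinality, i.e. $\mathcal R(\phi\circ X)=\phi(\mathcal R(X))$ for all $X\in\mathcal X_{\mathcal A}$ and all increasing continuous $\phi:\mathbb R\to\mathbb R$.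
   Context: A total preorder is a transitive and complete binary relation; $\prec$ denotes its strict part. A function $X$ is $\mathcal A$-measurable if $\{X>x\}\in\mathcal A$ and $\{X\ge x\}\in\mathcal A$ for all $x\in\mathbb R$. "Increasing" means non-strictly increasing. *)

theory Defs
  imports "HOL-Analysis.Analysis"
begin

text \<open>The nonempty ground set Omega is modelled by the (automatically nonempty) type 'a,
  i.e. Omega = UNIV; the algebra A is an algebra on UNIV.\<close>

definition A_measurable :: "'a set set \<Rightarrow> ('a \<Rightarrow> real) \<Rightarrow> bool" where
  "A_measurable A X \<longleftrightarrow> (\<forall>x::real. {\<omega>. X \<omega> > x} \<in> A \<and> {\<omega>. X \<omega> \<ge> x} \<in> A)"

definition bdd_meas :: "'a set set \<Rightarrow> ('a \<Rightarrow> real) set" where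
  "bdd_meas A = {X. (\<exists>M. \<forall>\<omega>. \<bar>X \<omega>\<bar> \<le> M) \<and> A_measurable A X}"

definition total_preorder_on :: "'b set \<Rightarrow> ('b \<Rightarrow> 'b \<Rightarrow> bool) \<Rightarrow> bool" where
  "total_preorder_on S le \<longleftrightarrow>
     (\<forall>x\<in>S. \<forall>y\<in>S. \<forall>z\<in>S. le x y \<longrightarrow> le y z \<longrightarrow> le x z) \<and>
     (\<forall>x\<in>S. \<forall>y\<in>S. le x y \<or> le y x)"

definition strict_part :: "('b \<Rightarrow> 'b \<Rightarrow> bool) \<Rightarrow> 'b \<Rightarrow> 'b \<Rightarrow> bool" where
  "strict_part le x y \<longleftrightarrow> le x y \<and> \<not> le y x"

definition num_rep :: "('b \<Rightarrow> real) set \<Rightarrow> (('b \<Rightarrow> real) \<Rightarrow> ('b \<Rightarrow> real) \<Rightarrow> bool)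
    \<Rightarrow> (('b \<Rightarrow> real) \<Rightarrow> real) \<Rightarrow> bool" where
  "num_rep S le R \<longleftrightarrow> (\<forall>X\<in>S. \<forall>Y\<in>S. le X Y \<longleftrightarrow> R X \<le> R Y)"

end

theory Submission
  imports Defs
begin

text \<open>Under invariance, affine rescalings show that constants are strictly ordered by their
  value, and every bounded X lies between the constants below and above its bounds. Let s be the
  supremum of the constants not preferred to X. If X were not indifferent to s, then translating
  X and s by d would give, for every real d, a nonempty open interval between the values of
  s + d and X + d, and these intervals would be pairwise disjoint: uncountably many disjoint
  intervals of the real line, which is impossible. So every X has a certainty equivalent, which
  is an ordinal representation.\<close>

lemma A_measurable_vimage_upset:
  fixes X :: "'a \<Rightarrow> real"
  assumes "algebra UNIV A" and "A_measurable A X"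
    and up: "\<And>s t. s \<in> U \<Longrightarrow> s \<le> t \<Longrightarrow> t \<in> U"
  shows "X -` U \<in> A"
proof (cases "U = {} \<or> U = UNIV")
  case True
  interpret algebra UNIV A by fact
  from True show ?thesis by auto
next
  case False
  then obtain t0 u0 where t0: "t0 \<notin> U" and u0: "u0 \<in> U" by auto
  have bdd: "bdd_below U"
    using t0 up by (meson bdd_below.I nle_le)
  have "U = {Inf U..} \<or> U = {Inf U<..}"
  proof (cases "Inf U \<in> U")
    case True
    then show ?thesis using up bdd by (auto intro: cInf_lower)
  next
    case False
    have "U = {Inf U<..}"
    proof safe
      fix x assume "x \<in> U"
      then show "Inf U < x" using False bdd by (metis cInf_lower order_le_less)
    next
      fix x assume "Inf U < x"
      then obtain u where "u \<in> U" "u < x" using cInf_less_iff[of U] u0 bdd by blast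
      then show "x \<in> U" using up by auto
    qed
    then show ?thesis ..
  qed
  then have "X -` U = {\<omega>. Inf U \<le> X \<omega>} \<or> X -` U = {\<omega>. Inf U < X \<omega>}"
    by auto
  then show ?thesis
    using \<open>A_measurable A X\<close> unfolding A_measurable_def by metis
qed

lemma bdd_meas_comp_mono:
  assumes "algebra UNIV A" and X: "X \<in> bdd_meas A" and "mono \<phi>"
  shows "\<phi> \<circ> X \<in> bdd_meas A"
proof -
  obtain M where M: "\<And>\<omega>. \<bar>X \<omega>\<bar> \<le> M" and meas: "A_measurable A X"
    using X unfolding bdd_meas_def by auto
  have "\<bar>(\<phi> \<circ> X) \<omega>\<bar> \<le> \<bar>\<phi> (-M)\<bar> + \<bar>\<phi> M\<bar>" for \<omega>
  proof -
    have "\<phi> (-M) \<le> \<phi> (X \<omega>)" "\<phi> (X \<omega>) \<le> \<phi> M"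
      using M[of \<omega>] monoD[OF \<open>mono \<phi>\<close>] by auto
    then show ?thesis by simp
  qed
  moreover have "A_measurable A (\<phi> \<circ> X)"
    unfolding A_measurable_def
  proof
    fix x
    have "X -` {t. x < \<phi> t} \<in> A"
      by (rule A_measurable_vimage_upset[OF assms(1) meas])
        (simp, meson \<open>mono \<phi>\<close> monoD less_le_trans)
    moreover have "X -` {t. x \<le> \<phi> t} \<in> A"
      by (rule A_measurable_vimage_upset[OF assms(1) meas])
        (simp, meson \<open>mono \<phi>\<close> monoD order_trans)
    ultimately show "{\<omega>. (\<phi> \<circ> X) \<omega> > x} \<in> A \<and> {\<omega>. (\<phi> \<circ> X) \<omega> \<ge> x} \<in> A"
      by (simp add: vimage_def)
  qed
  ultimately show ?thesis unfolding bdd_meas_def by blast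
qed

lemma bdd_meas_const:
  assumes "algebra UNIV A"
  shows "(\<lambda>_. c) \<in> bdd_meas A"
proof -
  interpret algebra UNIV A by fact
  have "{\<omega>::'a. P} \<in> A" for P using sets_Collect_const[of P] by simp
  then show ?thesis unfolding bdd_meas_def A_measurable_def by auto
qed

lemma no_real_indexed_chain_of_intervals:
  fixes f g :: "real \<Rightarrow> real"
  assumes nonempty: "\<And>d. f d < g d" and chain: "\<And>d d'. d < d' \<Longrightarrow> g d \<le> f d'"
  shows False
proof -
  obtain q where q: "\<And>d. q d \<in> \<rat> \<and> f d < q d \<and> q d < g d"
    using Rats_dense_in_real[OF nonempty] by metis
  have "strict_mono q"
    by (rule strict_monoI) (meson q chain less_le_trans less_trans)
  then have "inj q" by (rule strict_mono_imp_inj_on)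
  have "range q \<subseteq> \<rat>" using q by auto
  then have "countable (range q)" by (rule countable_subset[OF _ countable_rat])
  then have "countable (UNIV :: real set)" using \<open>inj q\<close> by (rule countable_image_inj_on)
  then show False using uncountable_UNIV_real by blast
qed

lemma comp_const_fun [simp]: "f \<circ> (\<lambda>_. c) = (\<lambda>_. f c)"
  by (simp add: comp_def)

locale ordinal_invariance =
  fixes A :: "'a set set" and R :: "('a \<Rightarrow> real) \<Rightarrow> real"
  assumes algebra: "algebra UNIV A"
    and const_0_less_1: "R (\<lambda>_. 0) < R (\<lambda>_. 1)"
    and invariant: "\<And>X Y \<phi>. X \<in> bdd_meas A \<Longrightarrow> Y \<in> bdd_meas A \<Longrightarrow> mono \<phi> \<Longrightarrow>
      continuous_on UNIV \<phi> \<Longrightarrow> R X \<le> R Y \<Longrightarrow> R (\<phi> \<circ> X) \<le> R (\<phi> \<circ> Y)"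
begin

lemma comp_mono_in_bdd_meas: "X \<in> bdd_meas A \<Longrightarrow> mono \<phi> \<Longrightarrow> \<phi> \<circ> X \<in> bdd_meas A"
  using bdd_meas_comp_mono[OF algebra] .

lemma const_in_bdd_meas: "(\<lambda>_. c) \<in> bdd_meas A"
  using bdd_meas_const[OF algebra] .

lemma invariant_eq:
  "\<lbrakk>X \<in> bdd_meas A; Y \<in> bdd_meas A; mono \<phi>; continuous_on UNIV \<phi>; R X = R Y\<rbrakk>
    \<Longrightarrow> R (\<phi> \<circ> X) = R (\<phi> \<circ> Y)"
  using invariant by (metis order_antisym order_refl)

lemma affine_le_iff:
  fixes a b :: real
  assumes "0 < b" and X: "X \<in> bdd_meas A" and Y: "Y \<in> bdd_meas A"
  shows "R ((\<lambda>t. a + b * t) \<circ> X) \<le> R ((\<lambda>t. a + b * t) \<circ> Y) \<longleftrightarrow> R X \<le> R Y"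
proof -
  let ?\<phi> = "\<lambda>t. a + b * t" and ?\<psi> = "\<lambda>t. (t - a) / b"
  have mono: "mono ?\<phi>" "mono ?\<psi>"
    using \<open>0 < b\<close> by (auto intro!: monoI divide_right_mono)
  have cont: "continuous_on UNIV ?\<phi>" "continuous_on UNIV ?\<psi>"
    using \<open>0 < b\<close> by (intro continuous_intros; simp)+
  have inverse: "?\<psi> \<circ> (?\<phi> \<circ> Z) = Z" for Z :: "'a \<Rightarrow> real"
    using \<open>0 < b\<close> by (auto simp: fun_eq_iff)
  show ?thesis
  proof
    assume "R X \<le> R Y"
    then show "R (?\<phi> \<circ> X) \<le> R (?\<phi> \<circ> Y)"
      by (rule invariant[OF X Y mono(1) cont(1)])
  next
    assume "R (?\<phi> \<circ> X) \<le> R (?\<phi> \<circ> Y)"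
    then have "R (?\<psi> \<circ> (?\<phi> \<circ> X)) \<le> R (?\<psi> \<circ> (?\<phi> \<circ> Y))"
      by (rule invariant[OF comp_mono_in_bdd_meas[OF X mono(1)] comp_mono_in_bdd_meas[OF Y mono(1)]
            mono(2) cont(2)])
    then show "R X \<le> R Y"
      unfolding inverse .
  qed
qed

lemma affine_less_iff:
  fixes a b :: real
  assumes "0 < b" and "X \<in> bdd_meas A" and "Y \<in> bdd_meas A"
  shows "R ((\<lambda>t. a + b * t) \<circ> X) < R ((\<lambda>t. a + b * t) \<circ> Y) \<longleftrightarrow> R X < R Y"
  using affine_le_iff[OF assms(1,3,2)] by (meson not_le)

lemma const_less: "c < d \<Longrightarrow> R (\<lambda>_. c) < R (\<lambda>_. d)"
  using affine_less_iff[of "d - c" "\<lambda>_. 0" "\<lambda>_. 1" c] const_0_less_1 const_in_bdd_meas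
  by simp

lemma const_le_iff: "R (\<lambda>_. c) \<le> R (\<lambda>_. d) \<longleftrightarrow> c \<le> d"
  using const_less[of c d] const_less[of d c] by (cases c d rule: linorder_cases) auto

lemma const_eq_iff: "R (\<lambda>_. c) = R (\<lambda>_. d) \<longleftrightarrow> c = d"
  using const_le_iff[of c d] const_le_iff[of d c] by auto

lemma shift_le_iff:
  "X \<in> bdd_meas A \<Longrightarrow> Y \<in> bdd_meas A \<Longrightarrow> R ((+) d \<circ> X) \<le> R ((+) d \<circ> Y) \<longleftrightarrow> R X \<le> R Y"
  using affine_le_iff[of 1 X Y d] by simp

lemma shift_less_iff:
  "X \<in> bdd_meas A \<Longrightarrow> Y \<in> bdd_meas A \<Longrightarrow> R ((+) d \<circ> X) < R ((+) d \<circ> Y) \<longleftrightarrow> R X < R Y"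
  using affine_less_iff[of 1 X Y d] by simp

lemma const_less_of_lower_bound:
  assumes X: "X \<in> bdd_meas A" and lower: "\<And>\<omega>. a \<le> X \<omega>" and "c < a"
  shows "R (\<lambda>_. c) < R X"
proof (rule ccontr)
  let ?\<phi> = "\<lambda>t. min t a"
  have mono: "mono ?\<phi>" and cont: "continuous_on UNIV ?\<phi>"
    by (auto intro: monoI continuous_on_min continuous_on_id continuous_on_const)
  assume "\<not> R (\<lambda>_. c) < R X"
  then have "R X \<le> R (\<lambda>_. c)" by simp
  then have "R (?\<phi> \<circ> X) \<le> R (?\<phi> \<circ> (\<lambda>_. c))"
    by (rule invariant[OF X const_in_bdd_meas mono cont])
  moreover have "?\<phi> \<circ> X = (\<lambda>_. a)"
    using lower by (simp add: fun_eq_iff min_absorb2)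
  ultimately show False
    using const_less[OF \<open>c < a\<close>] \<open>c < a\<close> by simp
qed

lemma less_const_of_upper_bound:
  assumes X: "X \<in> bdd_meas A" and upper: "\<And>\<omega>. X \<omega> \<le> a" and "a < c"
  shows "R X < R (\<lambda>_. c)"
proof (rule ccontr)
  let ?\<phi> = "\<lambda>t. max t a"
  have mono: "mono ?\<phi>" and cont: "continuous_on UNIV ?\<phi>"
    by (auto intro: monoI continuous_on_max continuous_on_id continuous_on_const)
  assume "\<not> R X < R (\<lambda>_. c)"
  then have "R (\<lambda>_. c) \<le> R X" by simp
  then have "R (?\<phi> \<circ> (\<lambda>_. c)) \<le> R (?\<phi> \<circ> X)"
    by (rule invariant[OF const_in_bdd_meas X mono cont])
  moreover have "?\<phi> \<circ> X = (\<lambda>_. a)"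
    using upper by (simp add: fun_eq_iff max_absorb2)
  ultimately show False
    using const_less[OF \<open>a < c\<close>] \<open>a < c\<close> by simp
qed

lemma eq_const_of_cut:
  assumes X: "X \<in> bdd_meas A"
    and below: "\<And>c. c < s \<Longrightarrow> R (\<lambda>_. c) < R X"
    and above: "\<And>c. s < c \<Longrightarrow> R X < R (\<lambda>_. c)"
  shows "R X = R (\<lambda>_. s)"
proof (rule ccontr)
  have const: "(\<lambda>_. c) \<in> bdd_meas A" for c
    by (rule const_in_bdd_meas)
  assume "R X \<noteq> R (\<lambda>_. s)"
  then consider "R (\<lambda>_. s) < R X" | "R X < R (\<lambda>_. s)"
    by linarith
  then show False
  proof cases
    case 1
    show False
    proof (rule no_real_indexed_chain_of_intervals)
      show "R (\<lambda>_. d + s) < R ((+) d \<circ> X)" for d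
        using 1 shift_less_iff[OF const X, of d] by simp
      show "R ((+) d \<circ> X) \<le> R (\<lambda>_. d' + s)" if "d < d'" for d d'
        using above[of "d' - d + s"] that shift_le_iff[OF X const[of "d' - d + s"], of d] by simp
    qed
  next
    case 2
    show False
    proof (rule no_real_indexed_chain_of_intervals)
      show "R ((+) d \<circ> X) < R (\<lambda>_. d + s)" for d
        using 2 shift_less_iff[OF X const, of d] by simp
      show "R (\<lambda>_. d + s) \<le> R ((+) d' \<circ> X)" if "d < d'" for d d'
        using below[of "d - d' + s"] that shift_le_iff[OF const[of "d - d' + s"] X, of d'] by simp
    qed
  qed
qed

lemma certainty_equivalent_exists:
  assumes X: "X \<in> bdd_meas A"
  shows "\<exists>c. R X = R (\<lambda>_. c)"
proof -
  obtain M where M: "\<And>\<omega>. \<bar>X \<omega>\<bar> \<le> M"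
    using X unfolding bdd_meas_def by auto
  have lower: "- M \<le> X \<omega>" and upper: "X \<omega> \<le> M" for \<omega>
    using M[of \<omega>] by (auto simp: abs_le_iff)
  define L where "L = {c. R (\<lambda>_. c) \<le> R X}"
  have "R (\<lambda>_. - M - 1) < R X"
    using const_less_of_lower_bound[OF X lower] by simp
  then have "- M - 1 \<in> L"
    unfolding L_def by simp
  then have "L \<noteq> {}" by auto
  have "c \<le> M" if "c \<in> L" for c
  proof (rule ccontr)
    assume "\<not> c \<le> M"
    then have "R X < R (\<lambda>_. c)"
      using less_const_of_upper_bound[OF X upper] by simp
    with that show False
      unfolding L_def by simp
  qed
  then have "bdd_above L"
    by (rule bdd_above.I)
  have "R (\<lambda>_. c) < R X" if "c < Sup L" for c
  proof -
    obtain l where "l \<in> L" "c < l"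
      using \<open>c < Sup L\<close> less_cSup_iff[OF \<open>L \<noteq> {}\<close> \<open>bdd_above L\<close>] by blast
    then show ?thesis
      using const_less[of c l] unfolding L_def by simp
  qed
  moreover have "R X < R (\<lambda>_. c)" if "Sup L < c" for c
    using that cSup_upper[OF _ \<open>bdd_above L\<close>, of c] unfolding L_def by force
  ultimately show ?thesis
    using eq_const_of_cut[OF X] by blast
qed

definition certainty_equivalent :: "('a \<Rightarrow> real) \<Rightarrow> real" where
  "certainty_equivalent X = (SOME c. R X = R (\<lambda>_. c))"

lemma R_eq_certainty_equivalent:
  "X \<in> bdd_meas A \<Longrightarrow> R X = R (\<lambda>_. certainty_equivalent X)"
  unfolding certainty_equivalent_def by (rule someI_ex[OF certainty_equivalent_exists])

lemma certainty_equivalent_le_iff: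
  "X \<in> bdd_meas A \<Longrightarrow> Y \<in> bdd_meas A \<Longrightarrow>
    certainty_equivalent X \<le> certainty_equivalent Y \<longleftrightarrow> R X \<le> R Y"
  by (simp add: R_eq_certainty_equivalent const_le_iff)

lemma certainty_equivalent_comp:
  assumes X: "X \<in> bdd_meas A" and mono: "mono \<phi>" and cont: "continuous_on UNIV \<phi>"
  shows "certainty_equivalent (\<phi> \<circ> X) = \<phi> (certainty_equivalent X)"
proof -
  have "R (\<lambda>_. certainty_equivalent (\<phi> \<circ> X)) = R (\<phi> \<circ> X)"
    using R_eq_certainty_equivalent comp_mono_in_bdd_meas[OF X mono] by simp
  also have "\<dots> = R (\<phi> \<circ> (\<lambda>_. certainty_equivalent X))"
    by (rule invariant_eq[OF X const_in_bdd_meas mono cont R_eq_certainty_equivalent[OF X]])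
  finally show ?thesis
    by (simp add: const_eq_iff)
qed

end

lemma ordinal_representation_imp_invariant:
  assumes "algebra UNIV A" and rep: "num_rep (bdd_meas A) le R"
    and ordinal: "\<And>Z. Z \<in> bdd_meas A \<Longrightarrow> R (\<phi> \<circ> Z) = \<phi> (R Z)"
    and X: "X \<in> bdd_meas A" and Y: "Y \<in> bdd_meas A" and "mono \<phi>" and "le X Y"
  shows "le (\<phi> \<circ> X) (\<phi> \<circ> Y)"
proof -
  have "R X \<le> R Y"
    using rep X Y \<open>le X Y\<close> unfolding num_rep_def by blast
  then have "R (\<phi> \<circ> X) \<le> R (\<phi> \<circ> Y)"
    using ordinal[OF X] ordinal[OF Y] \<open>mono \<phi>\<close> by (simp add: monoD)
  then show ?thesis
    using rep bdd_meas_comp_mono[OF assms(1)] X Y \<open>mono \<phi>\<close> unfolding num_rep_def by blast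
qed

theorem proposition2:
  fixes A :: "'a set set"
    and le :: "('a \<Rightarrow> real) \<Rightarrow> ('a \<Rightarrow> real) \<Rightarrow> bool"
  assumes "algebra UNIV A"
    and "total_preorder_on (bdd_meas A) le"
    and "strict_part le (\<lambda>_. 0) (\<lambda>_. 1)"
    and "\<exists>R. num_rep (bdd_meas A) le R"
  shows "(\<forall>X\<in>bdd_meas A. \<forall>Y\<in>bdd_meas A. \<forall>\<phi>::real \<Rightarrow> real.
            mono \<phi> \<and> continuous_on UNIV \<phi> \<longrightarrow> le X Y \<longrightarrow> le (\<phi> \<circ> X) (\<phi> \<circ> Y))
         \<longleftrightarrow>
         (\<exists>R. num_rep (bdd_meas A) le R \<and>
            (\<forall>X\<in>bdd_meas A. \<forall>\<phi>::real \<Rightarrow> real.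
               mono \<phi> \<and> continuous_on UNIV \<phi> \<longrightarrow> R (\<phi> \<circ> X) = \<phi> (R X)))"
proof
  assume invariant: "\<forall>X\<in>bdd_meas A. \<forall>Y\<in>bdd_meas A. \<forall>\<phi>::real \<Rightarrow> real.
    mono \<phi> \<and> continuous_on UNIV \<phi> \<longrightarrow> le X Y \<longrightarrow> le (\<phi> \<circ> X) (\<phi> \<circ> Y)"
  obtain R where rep: "num_rep (bdd_meas A) le R"
    using assms(4) by blast
  interpret ordinal_invariance A R
  proof (rule ordinal_invariance.intro[OF assms(1)])
    show "R (\<lambda>_. 0) < R (\<lambda>_. 1)"
      using assms(3) rep bdd_meas_const[OF assms(1)] unfolding strict_part_def num_rep_def by auto
    show "R (\<phi> \<circ> X) \<le> R (\<phi> \<circ> Y)"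
      if "X \<in> bdd_meas A" "Y \<in> bdd_meas A" "mono \<phi>" "continuous_on UNIV \<phi>" "R X \<le> R Y"
      for X Y \<phi>
      using invariant rep bdd_meas_comp_mono[OF assms(1)] that unfolding num_rep_def by blast
  qed
  show "\<exists>R. num_rep (bdd_meas A) le R \<and>
    (\<forall>X\<in>bdd_meas A. \<forall>\<phi>::real \<Rightarrow> real.
       mono \<phi> \<and> continuous_on UNIV \<phi> \<longrightarrow> R (\<phi> \<circ> X) = \<phi> (R X))"
    using rep by (intro exI[of _ certainty_equivalent])
      (auto simp: num_rep_def certainty_equivalent_le_iff certainty_equivalent_comp)
qed (use ordinal_representation_imp_invariant[OF assms(1)] in blast)

end
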